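(* Let $L$ be a bounded distributive lattice and $m\colon 2^{[n]}\to L$ an $L$-valued capacity. Then the Sugeno integral $\mathsf{Su}_m$ is inf-homogeneous and g-comonotone supremal, and it is also sup-homogeneous and g-comonotone infimal.
   Context: $[n]=\{1,\dots,n\}$; $0,1$ are bottom and top of $L$. An $L$-valued capacity is $m\colon 2^{[n]}\to L$, monotone w.r.t. inclusion, with $m(\emptyset)=0$, $m([n])=1$. $\mathsf{Su}_m(\mathbf x)=\bigvee_{I\subseteq[n]}\big(m(I)\wedge\bigwedge_{i\in I}x_i\big)=\bigwedge_{I\subseteq[n]}\big(m([n]\setminus I)\vee\bigvee_{i\in I}x_i\big)$ (empty meet $=1$, empty join $=0$). For $c\in L$, $\mathbf c=(c,\dots,c)$; operations on vectors are componentwise. $f\colon L^n\to L$ is inf-homogeneous if $f(\mathbf c\wedge\mathbf x)=c\wedge f(\mathbf x)$ and sup-homogeneous if $f(\mathbf c\vee\mathbf x)=c\vee f(\mathbf x)$, for all $\mathbf x\in L^n$, $c\in L$. $\mathbf x,\mathbf y$ are g-comonotone if for all $i,j$: $(x_i\vee y_i)\wedge(x_j\vee y_j)=(x_i\wedge x_j)\vee(y_i\wedge y_j)$. $f$ is g-comonotone supremal (resp. infimal) if $f(\mathbf x\vee\mathbf y)=f(\mathbf x)\vee f(\mathbf y)$ (resp. $f(\mathbf x\wedge\mathbf y)=f(\mathbf x)\wedge f(\mathbf y)$) for all g-comonotone $\mathbf x,\mathbf y$. *)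

theory Defs
  imports Main
begin

text \<open>Vectors in L^n are represented as functions nat => L, of which only the
components 1..n matter. Subsets of [n] are sets of naturals contained in {1..n}.\<close>

definition capacity :: "nat \<Rightarrow> (nat set \<Rightarrow> 'a::bounded_lattice) \<Rightarrow> bool" where
  "capacity n m \<longleftrightarrow>
     (\<forall>I J. I \<subseteq> J \<longrightarrow> J \<subseteq> {1..n} \<longrightarrow> m I \<le> m J) \<and>
     m {} = bot \<and> m {1..n} = top"

text \<open>Finite meet with the convention that the empty meet is top.\<close>
definition meet_set :: "'a::bounded_lattice set \<Rightarrow> 'a" where
  "meet_set A = Inf_fin (insert top A)"

definition sugeno :: "nat \<Rightarrow> (nat set \<Rightarrow> 'a::bounded_lattice) \<Rightarrow> (nat \<Rightarrow> 'a) \<Rightarrow> 'a" where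
  "sugeno n m x = Sup_fin ((\<lambda>I. inf (m I) (meet_set (x ` I))) ` Pow {1..n})"

definition const_vec :: "'a \<Rightarrow> nat \<Rightarrow> 'a" where
  "const_vec c = (\<lambda>i. c)"

definition inf_homogeneous :: "nat \<Rightarrow> ((nat \<Rightarrow> 'a::lattice) \<Rightarrow> 'a) \<Rightarrow> bool" where
  "inf_homogeneous n f \<longleftrightarrow> (\<forall>x c. f (\<lambda>i. inf (const_vec c i) (x i)) = inf c (f x))"

definition sup_homogeneous :: "nat \<Rightarrow> ((nat \<Rightarrow> 'a::lattice) \<Rightarrow> 'a) \<Rightarrow> bool" where
  "sup_homogeneous n f \<longleftrightarrow> (\<forall>x c. f (\<lambda>i. sup (const_vec c i) (x i)) = sup c (f x))"

definition g_comonotone :: "nat \<Rightarrow> (nat \<Rightarrow> 'a::lattice) \<Rightarrow> (nat \<Rightarrow> 'a) \<Rightarrow> bool" where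
  "g_comonotone n x y \<longleftrightarrow> (\<forall>i\<in>{1..n}. \<forall>j\<in>{1..n}.
     inf (sup (x i) (y i)) (sup (x j) (y j)) = sup (inf (x i) (x j)) (inf (y i) (y j)))"

definition g_comonotone_supremal :: "nat \<Rightarrow> ((nat \<Rightarrow> 'a::lattice) \<Rightarrow> 'a) \<Rightarrow> bool" where
  "g_comonotone_supremal n f \<longleftrightarrow>
     (\<forall>x y. g_comonotone n x y \<longrightarrow> f (\<lambda>i. sup (x i) (y i)) = sup (f x) (f y))"

definition g_comonotone_infimal :: "nat \<Rightarrow> ((nat \<Rightarrow> 'a::lattice) \<Rightarrow> 'a) \<Rightarrow> bool" where
  "g_comonotone_infimal n f \<longleftrightarrow>
     (\<forall>x y. g_comonotone n x y \<longrightarrow> f (\<lambda>i. inf (x i) (y i)) = inf (f x) (f y))"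

end

(*
  The Sugeno integral is the finite join of the terms m I \<sqinter> \<Sqinter>{x i | i \<in> I}, so each
  property reduces to comparing terms. Inf-homogeneity holds termwise, the term for I = {}
  vanishing because m {} = 0; sup-homogeneity follows from distributivity, the term for
  I = [n] (where m = 1) supplying the constant. For g-comonotone x and y the defining identity
  gives (x i \<squnion> y i) \<sqinter> (x j \<squnion> y j) \<le> x i \<squnion> y j. By distributivity this turns
  \<Sqinter>(x \<squnion> y)|I into \<Sqinter>x|I \<squnion> \<Sqinter>y|I, so Su(x \<squnion> y) splits termwise, and it yields
  \<Sqinter>x|I \<sqinter> \<Sqinter>y|J \<le> \<Sqinter>x|J \<squnion> \<Sqinter>y|I, which bounds every cross term of Su(x) \<sqinter> Su(y) by the join
  of the (x \<sqinter> y)-terms for J and for I.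
*)

theory Submission
  imports Defs
begin

lemma le_meet_set_iff:
  fixes A :: "'a::bounded_lattice set"
  assumes "finite A"
  shows "z \<le> meet_set A \<longleftrightarrow> (\<forall>a\<in>A. z \<le> a)"
  using assms unfolding meet_set_def by (simp add: Inf_fin.bounded_iff)

lemma meet_set_image_lower:
  fixes f :: "'b \<Rightarrow> 'a::bounded_lattice"
  assumes "finite I" "i \<in> I"
  shows "meet_set (f ` I) \<le> f i"
  using le_meet_set_iff[of "f ` I" "meet_set (f ` I)"] assms by simp

lemma meet_set_insert:
  fixes A :: "'a::bounded_lattice set"
  assumes "finite A"
  shows "meet_set (insert a A) = inf a (meet_set A)"
  using assms unfolding meet_set_def
  by (metis Inf_fin.insert empty_not_insert finite.insertI insert_commute)

lemma meet_set_image_inf: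
  fixes f g :: "'b \<Rightarrow> 'a::bounded_lattice"
  assumes "finite I"
  shows "meet_set ((\<lambda>i. inf (f i) (g i)) ` I) = inf (meet_set (f ` I)) (meet_set (g ` I))"
proof (rule order.antisym)
  have "meet_set ((\<lambda>i. inf (f i) (g i)) ` I) \<le> inf (f i) (g i)" if "i \<in> I" for i
    using meet_set_image_lower[OF assms that] .
  then show "meet_set ((\<lambda>i. inf (f i) (g i)) ` I) \<le> inf (meet_set (f ` I)) (meet_set (g ` I))"
    using assms by (simp add: le_meet_set_iff)
  show "inf (meet_set (f ` I)) (meet_set (g ` I)) \<le> meet_set ((\<lambda>i. inf (f i) (g i)) ` I)"
    using assms meet_set_image_lower[OF assms, of _ f] meet_set_image_lower[OF assms, of _ g]
    by (auto simp: le_meet_set_iff intro: le_infI1 le_infI2)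
qed

lemma meet_set_image_inf_const:
  fixes f :: "'b \<Rightarrow> 'a::bounded_lattice"
  assumes "finite I" "I \<noteq> {}"
  shows "meet_set ((\<lambda>i. inf c (f i)) ` I) = inf c (meet_set (f ` I))"
proof -
  have "(\<lambda>i. c) ` I = {c}"
    using assms(2) by auto
  then have "meet_set ((\<lambda>i. c) ` I) = c"
    by (simp add: meet_set_def)
  then show ?thesis
    using meet_set_image_inf[OF assms(1), of "\<lambda>i. c" f] by simp
qed

lemma sup_meet_set_image:
  fixes q :: "'b \<Rightarrow> 'a::{distrib_lattice, bounded_lattice}"
  assumes "finite J"
  shows "sup c (meet_set (q ` J)) = meet_set ((\<lambda>j. sup c (q j)) ` J)"
  using assms
proof (induction J rule: finite_induct)
  case empty
  then show ?case by (simp add: meet_set_def)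
next
  case (insert j J)
  then show ?case by (simp add: meet_set_insert sup_inf_distrib1)
qed

lemma le_sup_meet_set_iff:
  fixes p q :: "'b \<Rightarrow> 'a::{distrib_lattice, bounded_lattice}"
  assumes "finite I" "finite J"
  shows "z \<le> sup (meet_set (p ` I)) (meet_set (q ` J)) \<longleftrightarrow>
         (\<forall>i\<in>I. \<forall>j\<in>J. z \<le> sup (p i) (q j))"
proof -
  have "z \<le> sup (meet_set (p ` I)) (meet_set (q ` J)) \<longleftrightarrow>
        (\<forall>j\<in>J. z \<le> sup (q j) (meet_set (p ` I)))"
    using assms by (simp add: sup_meet_set_image le_meet_set_iff sup_commute)
  also have "\<dots> \<longleftrightarrow> (\<forall>j\<in>J. \<forall>i\<in>I. z \<le> sup (p i) (q j))"
    using assms by (simp add: sup_meet_set_image le_meet_set_iff sup_commute)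
  finally show ?thesis by blast
qed

lemma sugeno_le_iff:
  "sugeno n m x \<le> z \<longleftrightarrow> (\<forall>I\<subseteq>{1..n}. inf (m I) (meet_set (x ` I)) \<le> z)"
  unfolding sugeno_def by (subst Sup_fin.bounded_iff) auto

lemma sugeno_upper:
  assumes "I \<subseteq> {1..n}"
  shows "inf (m I) (meet_set (x ` I)) \<le> sugeno n m x"
  using sugeno_le_iff[of n m x "sugeno n m x"] assms by simp

lemma inf_sugeno_le_iff:
  fixes m :: "nat set \<Rightarrow> 'a::{distrib_lattice, bounded_lattice}"
  shows "inf c (sugeno n m x) \<le> z \<longleftrightarrow>
         (\<forall>I\<subseteq>{1..n}. inf c (inf (m I) (meet_set (x ` I))) \<le> z)"
proof -
  have eq: "inf c (sugeno n m x) = Sup_fin ((\<lambda>I. inf c (inf (m I) (meet_set (x ` I)))) ` Pow {1..n})"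
    unfolding sugeno_def
    by (subst Sup_fin.hom_commute[where h = "inf c", OF inf_sup_distrib1]) (auto simp: image_image)
  show ?thesis
    unfolding eq by (subst Sup_fin.bounded_iff) auto
qed

lemma sugeno_mono:
  fixes m :: "nat set \<Rightarrow> 'a::bounded_lattice"
  assumes "\<And>i. i \<in> {1..n} \<Longrightarrow> x i \<le> y i"
  shows "sugeno n m x \<le> sugeno n m y"
  unfolding sugeno_le_iff
proof (intro allI impI)
  fix I assume I: "I \<subseteq> {1..n}"
  then have "finite I"
    by (rule finite_subset) simp
  have "meet_set (x ` I) \<le> y i" if "i \<in> I" for i
    using meet_set_image_lower[OF \<open>finite I\<close> that, of x] assms[of i] I that by auto
  then have "meet_set (x ` I) \<le> meet_set (y ` I)"
    using \<open>finite I\<close> by (simp add: le_meet_set_iff)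
  then show "inf (m I) (meet_set (x ` I)) \<le> sugeno n m y"
    using sugeno_upper[OF I, of m y] by (meson inf_mono order.refl order.trans)
qed

lemma g_comonotone_cross:
  assumes "g_comonotone n x y" "i \<in> {1..n}" "j \<in> {1..n}"
  shows "inf (sup (x i) (y i)) (sup (x j) (y j)) \<le> sup (x i) (y j)"
proof -
  have "inf (sup (x i) (y i)) (sup (x j) (y j)) = sup (inf (x i) (x j)) (inf (y i) (y j))"
    using assms unfolding g_comonotone_def by blast
  also have "\<dots> \<le> sup (x i) (y j)"
    by (intro sup_mono) simp_all
  finally show ?thesis .
qed

lemma g_comonotone_meet_set_sup:
  fixes x y :: "nat \<Rightarrow> 'a::{distrib_lattice, bounded_lattice}"
  assumes com: "g_comonotone n x y" and I: "I \<subseteq> {1..n}"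
  shows "meet_set ((\<lambda>i. sup (x i) (y i)) ` I) = sup (meet_set (x ` I)) (meet_set (y ` I))"
proof (rule order.antisym)
  have fin: "finite I"
    using I by (rule finite_subset) simp
  show "meet_set ((\<lambda>i. sup (x i) (y i)) ` I) \<le> sup (meet_set (x ` I)) (meet_set (y ` I))"
    unfolding le_sup_meet_set_iff[OF fin fin]
  proof (intro ballI)
    fix i j assume "i \<in> I" "j \<in> I"
    then have "meet_set ((\<lambda>i. sup (x i) (y i)) ` I) \<le> inf (sup (x i) (y i)) (sup (x j) (y j))"
      using meet_set_image_lower[OF fin, of _ "\<lambda>i. sup (x i) (y i)"] by simp
    also have "\<dots> \<le> sup (x i) (y j)"
      using g_comonotone_cross[OF com] \<open>i \<in> I\<close> \<open>j \<in> I\<close> I by blast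
    finally show "meet_set ((\<lambda>i. sup (x i) (y i)) ` I) \<le> sup (x i) (y j)" .
  qed
  show "sup (meet_set (x ` I)) (meet_set (y ` I)) \<le> meet_set ((\<lambda>i. sup (x i) (y i)) ` I)"
    using fin meet_set_image_lower[OF fin, of _ x] meet_set_image_lower[OF fin, of _ y]
    by (auto simp: le_meet_set_iff intro: le_supI1 le_supI2)
qed

lemma g_comonotone_meet_set_cross:
  fixes x y :: "nat \<Rightarrow> 'a::{distrib_lattice, bounded_lattice}"
  assumes com: "g_comonotone n x y" and I: "I \<subseteq> {1..n}" and J: "J \<subseteq> {1..n}"
  shows "inf (meet_set (x ` I)) (meet_set (y ` J)) \<le> sup (meet_set (x ` J)) (meet_set (y ` I))"
proof -
  have finI: "finite I" and finJ: "finite J"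
    using I J by (auto intro: finite_subset)
  show ?thesis
    unfolding le_sup_meet_set_iff[OF finJ finI]
  proof (intro ballI)
    fix j i assume j: "j \<in> J" and i: "i \<in> I"
    have "inf (meet_set (x ` I)) (meet_set (y ` J)) \<le> inf (x i) (y j)"
      using meet_set_image_lower[OF finI i] meet_set_image_lower[OF finJ j]
      by (rule inf_mono)
    also have "\<dots> \<le> inf (sup (x j) (y j)) (sup (x i) (y i))"
      by (simp add: le_infI1 le_infI2)
    also have "\<dots> \<le> sup (x j) (y i)"
      using g_comonotone_cross[OF com] i j I J by blast
    finally show "inf (meet_set (x ` I)) (meet_set (y ` J)) \<le> sup (x j) (y i)" .
  qed
qed

lemma sugeno_inf_homogeneous:
  fixes m :: "nat set \<Rightarrow> 'a::{distrib_lattice, bounded_lattice}"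
  assumes "m {} = bot"
  shows "inf_homogeneous n (sugeno n m)"
  unfolding inf_homogeneous_def const_vec_def
proof (intro allI)
  fix c and x :: "nat \<Rightarrow> 'a"
  have summand: "inf (m I) (meet_set ((\<lambda>i. inf c (x i)) ` I)) = inf c (inf (m I) (meet_set (x ` I)))"
    if "I \<subseteq> {1..n}" for I
  proof (cases "I = {}")
    case True
    then show ?thesis using assms by simp
  next
    case False
    moreover have "finite I"
      using that by (rule finite_subset) simp
    ultimately show ?thesis
      by (simp add: meet_set_image_inf_const inf_left_commute)
  qed
  have "sugeno n m (\<lambda>i. inf c (x i)) \<le> z \<longleftrightarrow> inf c (sugeno n m x) \<le> z" for z
    by (simp add: sugeno_le_iff inf_sugeno_le_iff summand)
  then show "sugeno n m (\<lambda>i. inf c (x i)) = inf c (sugeno n m x)"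
    by (meson order.antisym order.refl)
qed

lemma sugeno_sup_homogeneous:
  fixes m :: "nat set \<Rightarrow> 'a::{distrib_lattice, bounded_lattice}"
  assumes "m {1..n} = top"
  shows "sup_homogeneous n (sugeno n m)"
  unfolding sup_homogeneous_def const_vec_def
proof (intro allI order.antisym)
  fix c and x :: "nat \<Rightarrow> 'a"
  show "sugeno n m (\<lambda>i. sup c (x i)) \<le> sup c (sugeno n m x)"
    unfolding sugeno_le_iff
  proof (intro allI impI)
    fix I assume I: "I \<subseteq> {1..n}"
    then have "finite I"
      by (rule finite_subset) simp
    then have "inf (m I) (meet_set ((\<lambda>i. sup c (x i)) ` I)) = inf (m I) (sup c (meet_set (x ` I)))"
      by (simp add: sup_meet_set_image)
    also have "\<dots> \<le> sup c (inf (m I) (meet_set (x ` I)))"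
      by (auto simp: inf_sup_distrib1 intro: le_supI1 le_supI2 le_infI2)
    also have "\<dots> \<le> sup c (sugeno n m x)"
      using sugeno_upper[OF I] by (rule sup_mono[OF order.refl])
    finally show "inf (m I) (meet_set ((\<lambda>i. sup c (x i)) ` I)) \<le> sup c (sugeno n m x)" .
  qed
  have "c \<le> inf (m {1..n}) (meet_set ((\<lambda>i. sup c (x i)) ` {1..n}))"
    using assms by (simp add: le_meet_set_iff)
  also have "\<dots> \<le> sugeno n m (\<lambda>i. sup c (x i))"
    by (rule sugeno_upper) simp
  finally have "c \<le> sugeno n m (\<lambda>i. sup c (x i))" .
  moreover have "sugeno n m x \<le> sugeno n m (\<lambda>i. sup c (x i))"
    by (rule sugeno_mono) simp
  ultimately show "sup c (sugeno n m x) \<le> sugeno n m (\<lambda>i. sup c (x i))"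
    by simp
qed

lemma sugeno_g_comonotone_supremal:
  fixes m :: "nat set \<Rightarrow> 'a::{distrib_lattice, bounded_lattice}"
  shows "g_comonotone_supremal n (sugeno n m)"
  unfolding g_comonotone_supremal_def
proof (intro allI impI)
  fix x y :: "nat \<Rightarrow> 'a" assume com: "g_comonotone n x y"
  have "sugeno n m (\<lambda>i. sup (x i) (y i)) \<le> z \<longleftrightarrow> sup (sugeno n m x) (sugeno n m y) \<le> z" for z
    by (auto simp: sugeno_le_iff g_comonotone_meet_set_sup[OF com] inf_sup_distrib1)
  then show "sugeno n m (\<lambda>i. sup (x i) (y i)) = sup (sugeno n m x) (sugeno n m y)"
    by (meson order.antisym order.refl)
qed

lemma sugeno_g_comonotone_infimal:
  fixes m :: "nat set \<Rightarrow> 'a::{distrib_lattice, bounded_lattice}"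
  shows "g_comonotone_infimal n (sugeno n m)"
  unfolding g_comonotone_infimal_def
proof (intro allI impI order.antisym)
  fix x y :: "nat \<Rightarrow> 'a" assume com: "g_comonotone n x y"
  define xy where "xy = (\<lambda>i. inf (x i) (y i))"
  show "sugeno n m (\<lambda>i. inf (x i) (y i)) \<le> inf (sugeno n m x) (sugeno n m y)"
    by (intro le_infI sugeno_mono) simp_all
  have "inf (inf (m I) (meet_set (x ` I))) (inf (m J) (meet_set (y ` J))) \<le> sugeno n m xy"
    if I: "I \<subseteq> {1..n}" and J: "J \<subseteq> {1..n}" for I J
  proof -
    define a where "a = inf (inf (m I) (meet_set (x ` I))) (inf (m J) (meet_set (y ` J)))"
    have finI: "finite I" and finJ: "finite J"
      using I J by (auto intro: finite_subset)
    have "a \<le> sup (meet_set (x ` J)) (meet_set (y ` I))"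
      unfolding a_def using g_comonotone_meet_set_cross[OF com I J]
      by (meson order.trans inf_mono inf.cobounded2)
    then have "a = sup (inf a (meet_set (x ` J))) (inf a (meet_set (y ` I)))"
      by (simp add: inf.absorb1 flip: inf_sup_distrib1)
    also have "\<dots> \<le> sup (inf (m J) (meet_set (xy ` J))) (inf (m I) (meet_set (xy ` I)))"
      unfolding a_def xy_def meet_set_image_inf[OF finJ] meet_set_image_inf[OF finI]
      by (intro sup_mono) (auto intro: le_infI1 le_infI2)
    also have "\<dots> \<le> sugeno n m xy"
      using sugeno_upper[OF I, of m xy] sugeno_upper[OF J, of m xy] by simp
    finally show ?thesis
      unfolding a_def .
  qed
  then have "inf (sugeno n m y) (inf (m I) (meet_set (x ` I))) \<le> sugeno n m xy"
    if "I \<subseteq> {1..n}" for I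
    unfolding inf_commute[of "sugeno n m y"] inf_sugeno_le_iff using that by blast
  then have "inf (sugeno n m y) (sugeno n m x) \<le> sugeno n m xy"
    unfolding inf_sugeno_le_iff by blast
  then show "inf (sugeno n m x) (sugeno n m y) \<le> sugeno n m (\<lambda>i. inf (x i) (y i))"
    by (simp add: inf_commute xy_def)
qed

theorem lemma3:
  fixes n :: nat and m :: "nat set \<Rightarrow> 'a::{distrib_lattice, bounded_lattice}"
  assumes "capacity n m"
  shows "inf_homogeneous n (sugeno n m) \<and> g_comonotone_supremal n (sugeno n m) \<and>
         sup_homogeneous n (sugeno n m) \<and> g_comonotone_infimal n (sugeno n m)"
  using assms unfolding capacity_def
  by (simp add: sugeno_inf_homogeneous sugeno_g_comonotone_supremal
      sugeno_sup_homogeneous sugeno_g_comonotone_infimal)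

end
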